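(* Under the standing setup and with $u$, $z^*$, $r_u$, $\delta_v$, $z_v$ as in the context, assume $\beta(u)\ne0$ and let $v\in B(u,r_u)\cap\widetilde X$ satisfy $\|u-v\|\le\frac{\varepsilon\|\beta(u)\|}{480}$. Then \[\|z_v-\beta(v)\|\le\frac{128\|u-u_{NN}\|^{1/2}}{\varepsilon^{1/2}}\|u-v\|^{1/2}.\]
   Context: Norms are Euclidean; $B(x,r)$ is the open ball. Standing setup: $X\subseteq\mathbb{R}^d$ has reach $\tau_X>0$, where $\tau_X=\sup\{t\ge0:\text{every }x\text{ with }d(x,X)<t\text{ has a unique closest point in }\overline X\}$; $\widetilde X=X+B(0,\tau_X/2)$; for $u\in\widetilde X$, $u_{NN}$ is the unique closest point to $u$ in $\overline X$, and it is a known fact that $\|u_{NN}-v_{NN}\|\le2\|u-v\|$ for all $u,v\in\widetilde X$. $\varepsilon\in(0,1)$. $S_X=\overline{\{(x-y)/\|x-y\|:x\ne y\in X\}}$. A linear $\Pi$ provides $\eta$-convex hull distortion for $T\subseteq S^{d-1}$ if $|\,\|\Pi x\|-\|x\|\,|<\eta$ for all $x\in\operatorname{conv}(T)$. $\mathcal C=\{w_1,\ldots,w_\ell\}\subseteq S_X$ is finite with every $v\in S_X$ within distance $<\varepsilon/40$ of some $w_i$; $\Pi\in\mathbb{R}^{m\times d}$ provides $\frac{\varepsilon}{240}$-convex hull distortion for $S_X$. For $z\in\mathbb{R}^m$, $u\in\widetilde X$, $i=1,\ldots,\ell$: $\tilde g_i(z,u)=\langle z,\Pi w_i\rangle-\langle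 u-u_{NN},w_i\rangle-\frac{\varepsilon}{30}\|u-u_{NN}\|$, $\tilde g_{\ell+i}(z,u)=\langle u-u_{NN},w_i\rangle-\langle z,\Pi w_i\rangle-\frac{\varepsilon}{30}\|u-u_{NN}\|$; $\widetilde F_u=\{z:\tilde g_i(z,u)\le0\ \forall i\}$; $\beta(u)=\arg\min_{z\in\widetilde F_u}\|z\|$. Fix $u\in\widetilde X\setminus\overline X$ and $z^*\in\mathbb{R}^m$ with $\|z^*\|\le\|u-u_{NN}\|$ and $\tilde g_i(z^*,u)\le-\frac{\varepsilon}{60}\|u-u_{NN}\|$ for all $i$. Set $r_u=\min\{1,\frac{\varepsilon\|u-u_{NN}\|}{480}\}$, and for $v\in B(u,r_u)\cap\widetilde X$, $\delta_v=\frac{240\|u-v\|}{\varepsilon\|u-u_{NN}\|}$, $z_v=(1-\delta_v)\beta(u)+\delta_vz^*$. *)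

theory Defs
  imports "HOL-Analysis.Analysis" "HOL-Library.Extended_Real"
begin

definition is_closest :: "'a::euclidean_space set \<Rightarrow> 'a \<Rightarrow> 'a \<Rightarrow> bool" where
  "is_closest X x y \<longleftrightarrow> y \<in> closure X \<and> (\<forall>z\<in>closure X. dist x y \<le> dist x z)"

text \<open>Reach (as an extended real, it may be infinite, e.g. for convex X).\<close>
definition reach :: "'a::euclidean_space set \<Rightarrow> ereal" where
  "reach X = Sup {ereal t | t. t \<ge> 0 \<and>
      (\<forall>x. infdist x X < t \<longrightarrow> (\<exists>!y. is_closest X x y))}"

definition tube :: "'a::euclidean_space set \<Rightarrow> 'a set" where
  "tube X = {x + b | x b. x \<in> X \<and> ereal (norm b) < reach X / 2}"

definition nn :: "'a::euclidean_space set \<Rightarrow> 'a \<Rightarrow> 'a" where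
  "nn X u = (THE y. is_closest X u y)"

definition secants :: "'a::euclidean_space set \<Rightarrow> 'a set" where
  "secants X = closure {(x - y) /\<^sub>R norm (x - y) | x y. x \<in> X \<and> y \<in> X \<and> x \<noteq> y}"

definition cvx_hull_distortion :: "('a::euclidean_space \<Rightarrow> 'b::euclidean_space) \<Rightarrow> real \<Rightarrow> 'a set \<Rightarrow> bool" where
  "cvx_hull_distortion P eta T \<longleftrightarrow> (\<forall>x\<in>convex hull T. \<bar>norm (P x) - norm x\<bar> < eta)"

text \<open>The feasible set tilde F_u; the constraints are indexed by w in the finite set C
  (both families g_i and g_{l+i}).\<close>
definition feas :: "'a::euclidean_space set \<Rightarrow> ('a \<Rightarrow> 'b::euclidean_space) \<Rightarrow> 'a set \<Rightarrow> real \<Rightarrow> 'a \<Rightarrow> 'b set" where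
  "feas X P C eps u = {z. \<forall>w\<in>C.
      inner z (P w) - inner (u - nn X u) w - eps / 30 * norm (u - nn X u) \<le> 0 \<and>
      inner (u - nn X u) w - inner z (P w) - eps / 30 * norm (u - nn X u) \<le> 0}"

definition beta :: "'a::euclidean_space set \<Rightarrow> ('a \<Rightarrow> 'b::euclidean_space) \<Rightarrow> 'a set \<Rightarrow> real \<Rightarrow> 'a \<Rightarrow> 'b" where
  "beta X P C eps u = (THE z. z \<in> feas X P C eps u \<and> (\<forall>y\<in>feas X P C eps u. norm z \<le> norm y))"

end

theory Submission
  imports Defs
begin

text \<open>
  beta(u) is the projection of 0 onto F_u, an intersection of slabs
  {z. |<z, Pi w> - <u - u_NN, w>| <= eps/30 |u - u_NN|}. Below the reach the nearest-point map is
  2-Lipschitz, so passing from u to v moves the centres and radii of these slabs by O(|u - v|),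
  and the slack eps/60 |u - u_NN| of z* absorbs this: z_v lies in F_v and
  (1 - delta) beta(v) + delta z* lies in F_u. Minimality of beta(u) and beta(v) then gives
  |z_v|^2 - |beta(v)|^2 <= 4 delta |u - u_NN|^2, and since beta(v) projects 0 onto the convex set
  F_v, also |z_v - beta(v)|^2 <= |z_v|^2 - |beta(v)|^2.

  The Lipschitz bound is derived from the definition of the reach through Federer's observation
  that the nearest point is constant along normal rays, which is proved by walking outward along
  the normal in small steps and using uniform continuity of the nearest-point map.
\<close>

section \<open>Nearest points below the reach\<close>

lemma nonempty_if_reach_pos:
  assumes "reach X > 0" shows "X \<noteq> {}"
proof
  assume X: "X = {}"
  have "{ereal t | t. t \<ge> 0 \<and> (\<forall>x. infdist x X < t \<longrightarrow> (\<exists>!y. is_closest X x y))} \<subseteq> {0}"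
  proof
    fix e assume "e \<in> {ereal t | t. t \<ge> 0 \<and> (\<forall>x. infdist x X < t \<longrightarrow> (\<exists>!y. is_closest X x y))}"
    then obtain t where t: "e = ereal t" "t \<ge> 0" "\<forall>x. infdist x X < t \<longrightarrow> (\<exists>!y. is_closest X x y)"
      by blast
    have "t = 0"
    proof (rule ccontr)
      assume "t \<noteq> 0"
      then have "infdist 0 X < t" using t X by (simp add: infdist_def)
      then show False using t(3) X by (auto simp: is_closest_def)
    qed
    then show "e \<in> {0}" using t by (simp add: zero_ereal_def)
  qed
  then have "reach X \<le> 0" unfolding reach_def by (intro Sup_least) auto
  then show False using assms by simp
qed

lemma unique_closest_if_infdist_less_reach:
  "ereal (infdist x X) < reach X \<Longrightarrow> \<exists>!y. is_closest X x y"
  unfolding reach_def less_Sup_iff by auto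

lemma infdist_less_reach_div_2_if_tube:
  assumes "u \<in> tube X" shows "ereal (infdist u X) < reach X / 2"
proof -
  obtain x b where xb: "x \<in> X" "u = x + b" "ereal (norm b) < reach X / 2"
    using assms unfolding tube_def by blast
  have "infdist u X \<le> norm b" using infdist_le[OF xb(1), of u] xb(2) by (simp add: dist_norm)
  then show ?thesis using xb(3) by (meson ereal_less_eq(3) order_le_less_trans)
qed

lemma infdist_closure: "infdist x (closure X) = infdist x X"
  by (simp add: infdist_eq_setdist)

lemma infdist_le_if_mem_closure: "y \<in> closure X \<Longrightarrow> infdist x X \<le> dist x y"
  using infdist_le[of y "closure X" x] by (simp add: infdist_closure)

lemma is_closest_iff_infdist:
  fixes X :: "'a::euclidean_space set"
  assumes "X \<noteq> {}"
  shows "is_closest X x y \<longleftrightarrow> y \<in> closure X \<and> dist x y = infdist x X"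
proof -
  have "dist x y \<le> infdist x (closure X)" if "\<forall>z\<in>closure X. dist x y \<le> dist x z"
    unfolding infdist_def using that assms by (auto intro: cINF_greatest)
  then show ?thesis
    unfolding is_closest_def infdist_closure using infdist_le_if_mem_closure by (auto intro: antisym)
qed

lemma infdist_le_add_if_mem_cball: "w \<in> cball x s \<Longrightarrow> infdist w X \<le> infdist x X + s"
  using infdist_triangle[of w X x] by (simp add: dist_commute)

lemma power2_norm_add_scaleR:
  fixes a n :: "'a::real_inner"
  shows "(norm (a + h *\<^sub>R n))\<^sup>2 = (norm a)\<^sup>2 + 2 * h * inner n a + h\<^sup>2 * (norm n)\<^sup>2"
  by (simp only: power2_norm_eq_inner)
    (simp add: inner_add_left inner_add_right inner_commute algebra_simps power2_eq_square)

primrec normal_walk :: "'a::euclidean_space set \<Rightarrow> real \<Rightarrow> 'a \<Rightarrow> nat \<Rightarrow> 'a" where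
  "normal_walk X h x 0 = x"
| "normal_walk X h x (Suc k) = normal_walk X h x k
    + (h / infdist (normal_walk X h x k) X) *\<^sub>R (normal_walk X h x k - nn X (normal_walk X h x k))"

text \<open>Positive reach enters only through this hypothesis.\<close>
locale unique_closest_below =
  fixes X :: "'a::euclidean_space set" and R :: real
  assumes nonempty: "X \<noteq> {}"
    and unique_closest: "\<And>x. infdist x X < R \<Longrightarrow> \<exists>!y. is_closest X x y"
begin

lemma is_closest_nn: "infdist x X < R \<Longrightarrow> is_closest X x (nn X x)"
  unfolding nn_def by (rule theI'[OF unique_closest])

lemma nn_in_closure: "infdist x X < R \<Longrightarrow> nn X x \<in> closure X"
  using is_closest_nn is_closest_def by blast

lemma dist_nn: "infdist x X < R \<Longrightarrow> dist x (nn X x) = infdist x X"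
  using is_closest_nn is_closest_iff_infdist[OF nonempty] by blast

lemma norm_diff_nn: "infdist x X < R \<Longrightarrow> norm (x - nn X x) = infdist x X"
  using dist_nn by (simp add: dist_norm)

lemma nn_eqI: "infdist x X < R \<Longrightarrow> y \<in> closure X \<Longrightarrow> dist x y = infdist x X \<Longrightarrow> nn X x = y"
  using is_closest_nn unique_closest is_closest_iff_infdist[OF nonempty] by blast

text \<open>The graph of nn over a compact ball is closed, being cut out by the continuous equation
  dist x y = infdist x X.\<close>
lemma continuous_on_nn:
  assumes "infdist x X + s < R"
  shows "continuous_on (cball x s) (nn X)"
proof (rule continuous_from_closed_graph[of "cball x (s + R)"])
  have lt: "infdist w X < R" if "w \<in> cball x s" for w
    using infdist_le_add_if_mem_cball[OF that, of X] assms by simp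
  show "compact (cball x (s + R))" by simp
  show "nn X \<in> cball x s \<rightarrow> cball x (s + R)"
  proof
    fix w assume w: "w \<in> cball x s"
    have "dist x (nn X w) \<le> dist x w + dist w (nn X w)" by (rule dist_triangle)
    also have "\<dots> \<le> s + R" using w dist_nn[OF lt[OF w]] lt[OF w] by simp
    finally show "nn X w \<in> cball x (s + R)" by simp
  qed
  have "(\<lambda>w. (w, nn X w)) ` cball x s
      = (cball x s \<times> closure X) \<inter> {p. dist (fst p) (snd p) = infdist (fst p) X}"
    using nn_in_closure dist_nn nn_eqI lt by (auto simp: image_iff)
  then show "closed ((\<lambda>w. (w, nn X w)) ` cball x s)"
    by (simp add: closed_Int closed_Times closed_Collect_eq continuous_intros)
qed

lemma infdist_normal_step:
  assumes w: "infdist w X < R" "0 < infdist w X" and h: "0 \<le> h"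
    and y: "y = w + (h / infdist w X) *\<^sub>R (w - nn X w)" "infdist y X < R"
    and om: "dist (nn X w) (nn X y) \<le> om" "0 \<le> om" "om \<le> infdist w X"
  shows "infdist w X + h - h * (om / infdist w X) \<le> infdist y X"
proof -
  define D c c' where "D = infdist w X" and "c = nn X w" and "c' = nn X y"
  define \<nu> where "\<nu> = (1 / D) *\<^sub>R (w - c)"
  have D: "0 < D" and wc: "norm (w - c) = D" using w norm_diff_nn by (auto simp: D_def c_def)
  have \<nu>: "norm \<nu> = 1" "inner \<nu> (w - c) = D"
    using wc D by (auto simp: \<nu>_def power2_norm_eq_inner[symmetric] power2_eq_square)
  have yc': "y - c' = (w - c') + h *\<^sub>R \<nu>" using y(1) by (simp add: \<nu>_def c_def D_def algebra_simps)
  have wc': "D \<le> norm (w - c')"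
    using infdist_le_if_mem_closure[OF nn_in_closure[OF y(2)]] by (simp add: D_def c'_def dist_norm)
  have "\<bar>inner \<nu> (c - c')\<bar> \<le> om"
    using Cauchy_Schwarz_ineq2[of \<nu> "c - c'"] om(1) \<nu>(1) by (simp add: c_def c'_def dist_norm)
  then have "D - om \<le> inner \<nu> (w - c')"
    using \<nu>(2) by (simp add: inner_diff_right[of \<nu> w c'] inner_diff_right[of \<nu> w c] inner_diff_right[of \<nu> c c'])
  then have "D\<^sup>2 + 2 * h * (D - om) + h\<^sup>2 \<le> (norm (w - c'))\<^sup>2 + 2 * h * inner \<nu> (w - c') + h\<^sup>2"
    using wc' D h by (intro add_mono mult_left_mono power_mono) auto
  also have "\<dots> = (norm (y - c'))\<^sup>2"
    unfolding yc' power2_norm_add_scaleR \<nu>(1) by simp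
  also have "\<dots> = (infdist y X)\<^sup>2" using norm_diff_nn[OF y(2)] by (simp add: c'_def)
  finally have sq: "(D + h)\<^sup>2 - 2 * h * om \<le> (infdist y X)\<^sup>2" by (simp add: power2_eq_square algebra_simps)
  have "(D + h - h * (om / D))\<^sup>2 \<le> (D + h)\<^sup>2 - 2 * h * om"
  proof -
    have "(D + h)\<^sup>2 - 2 * h * om - (D + h - h * (om / D))\<^sup>2 = h\<^sup>2 * (om / D) * (2 - om / D)"
      using D by (simp add: power2_eq_square field_simps)
    moreover have "0 \<le> om / D" "om / D \<le> 1" using D om(2,3) by (auto simp: D_def)
    then have "0 \<le> h\<^sup>2 * (om / D) * (2 - om / D)" by (intro mult_nonneg_nonneg) auto
    ultimately show ?thesis by linarith
  qed
  then have "(D + h - h * (om / D))\<^sup>2 \<le> (infdist y X)\<^sup>2" using sq by linarith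
  then show ?thesis unfolding D_def[symmetric] by (rule power2_le_imp_le) (rule infdist_nonneg)
qed

lemma normal_walk_progress:
  assumes m: "0 < infdist x X" and R: "infdist x X + s < R"
    and h: "0 < h" and \<theta>: "0 \<le> \<theta>" "\<theta> \<le> 1"
    and cont: "\<And>w w'. w \<in> cball x s \<Longrightarrow> w' \<in> cball x s \<Longrightarrow> dist w w' \<le> h \<Longrightarrow>
      dist (nn X w) (nn X w') \<le> \<theta> * infdist x X"
  shows "real k * h \<le> s \<Longrightarrow> dist x (normal_walk X h x k) \<le> real k * h
      \<and> infdist x X + real k * h * (1 - \<theta>) \<le> infdist (normal_walk X h x k) X"
proof (induction k)
  case 0
  then show ?case by simp
next
  case (Suc k)
  define w y where "w = normal_walk X h x k" and "y = normal_walk X h x (Suc k)"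
  have lt: "infdist v X < R" if "v \<in> cball x s" for v
    using infdist_le_add_if_mem_cball[OF that, of X] R by simp
  have kh: "real k * h \<le> s" using Suc.prems h by (simp add: distrib_right)
  then have IH: "dist x w \<le> real k * h" "infdist x X + real k * h * (1 - \<theta>) \<le> infdist w X"
    using Suc.IH by (auto simp: w_def)
  then have wK: "w \<in> cball x s" using kh by simp
  have "0 \<le> real k * h * (1 - \<theta>)" using h \<theta> by simp
  then have Dm: "infdist x X \<le> infdist w X" using IH(2) by linarith
  have y_def': "y = w + (h / infdist w X) *\<^sub>R (w - nn X w)" by (simp add: y_def w_def)
  have dwy: "dist w y = h" using norm_diff_nn[OF lt[OF wK]] Dm m h by (simp add: y_def' dist_norm)
  have dxy: "dist x y \<le> real (Suc k) * h"
    using dist_triangle[of x y w] IH(1) dwy by (simp add: algebra_simps)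
  then have yK: "y \<in> cball x s" using Suc.prems by simp
  have om: "dist (nn X w) (nn X y) \<le> \<theta> * infdist x X"
    using cont[OF wK yK] dwy by simp
  have "\<theta> * infdist x X \<le> infdist w X"
    using mult_left_le_one_le[of "infdist x X" \<theta>] Dm m \<theta> by linarith
  then have step: "infdist w X + h - h * (\<theta> * infdist x X / infdist w X) \<le> infdist y X"
    using Dm m \<theta> h by (intro infdist_normal_step[OF lt[OF wK] _ _ y_def' lt[OF yK] om]) auto
  have "\<theta> * infdist x X / infdist w X \<le> \<theta>"
    using Dm m \<theta> by (simp add: divide_le_eq mult_left_mono)
  then have "h * (\<theta> * infdist x X / infdist w X) \<le> h * \<theta>" by (rule mult_left_mono) (use h in linarith)
  moreover have "infdist x X + real (Suc k) * h * (1 - \<theta>)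
      = (infdist x X + real k * h * (1 - \<theta>)) + h - h * \<theta>" by (simp add: algebra_simps)
  ultimately have "infdist x X + real (Suc k) * h * (1 - \<theta>) \<le> infdist y X"
    using step IH(2) by linarith
  then show ?case using dxy unfolding y_def by blast
qed

text \<open>Uniform continuity of nn makes each step of a fine enough normal walk gain almost its full
  length.\<close>
lemma exists_almost_far_point_in_cball:
  assumes m: "0 < infdist x X" and s: "0 \<le> s" and R: "infdist x X + s < R" and \<eta>: "0 < \<eta>"
  shows "\<exists>w\<in>cball x s. infdist x X + s - \<eta> \<le> infdist w X"
proof (cases "s = 0")
  case True
  then show ?thesis using \<eta> by (intro bexI[of _ x]) auto
next
  case False
  then have sp: "0 < s" using s by simp
  define \<theta> where "\<theta> = min 1 (\<eta> / s)"
  have \<theta>: "0 < \<theta>" "\<theta> \<le> 1" using sp \<eta> by (auto simp: \<theta>_def)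
  have "s * \<theta> \<le> s * (\<eta> / s)" using sp by (intro mult_left_mono) (auto simp: \<theta>_def)
  then have s\<theta>: "s * \<theta> \<le> \<eta>" using sp by simp
  have "uniformly_continuous_on (cball x s) (nn X)"
    by (rule compact_uniformly_continuous[OF continuous_on_nn[OF R]]) simp
  moreover have "0 < \<theta> * infdist x X" using \<theta>(1) m by simp
  ultimately obtain \<delta> where \<delta>: "0 < \<delta>" and uc: "\<forall>w\<in>cball x s. \<forall>w'\<in>cball x s.
      dist w' w < \<delta> \<longrightarrow> dist (nn X w') (nn X w) < \<theta> * infdist x X"
    unfolding uniformly_continuous_on_def by blast
  obtain N :: nat where N: "s / \<delta> < real N" using reals_Archimedean2 by blast
  moreover have "0 < s / \<delta>" using sp \<delta> by simp
  ultimately have Np: "0 < real N" by linarith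
  define h where "h = s / real N"
  have h: "0 < h" "real N * h = s" using sp Np by (auto simp: h_def)
  have "s < \<delta> * real N" using N \<delta> by (simp add: divide_less_eq mult.commute)
  then have "h < \<delta>" using Np by (simp add: h_def divide_less_eq)
  have "dist x (normal_walk X h x N) \<le> real N * h
      \<and> infdist x X + real N * h * (1 - \<theta>) \<le> infdist (normal_walk X h x N) X"
    using uc \<open>h < \<delta>\<close> h(2) \<theta>
    by (intro normal_walk_progress[OF m R h(1)]) (auto simp: dist_commute less_imp_le)
  moreover have "real N * h * (1 - \<theta>) = s - s * \<theta>" using h(2) by (simp add: algebra_simps)
  ultimately show ?thesis
    using h(2) s\<theta> by (intro bexI[of _ "normal_walk X h x N"]) auto
qed

lemma exists_far_point_in_cball:
  assumes m: "0 < infdist x X" and s: "0 \<le> s" and R: "infdist x X + s < R"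
  shows "\<exists>w\<in>cball x s. infdist x X + s \<le> infdist w X"
proof -
  have "continuous_on (cball x s) (\<lambda>w. infdist w X)" by (intro continuous_intros)
  then obtain ws where ws: "ws \<in> cball x s" "\<And>y. y \<in> cball x s \<Longrightarrow> infdist y X \<le> infdist ws X"
    using continuous_attains_sup[of "cball x s" "\<lambda>w. infdist w X"] s by auto
  have "infdist x X + s \<le> infdist ws X"
  proof (rule field_le_epsilon)
    fix e :: real assume "0 < e"
    then obtain w where "w \<in> cball x s" "infdist x X + s - e \<le> infdist w X"
      using exists_almost_far_point_in_cball[OF assms] by blast
    then show "infdist x X + s \<le> infdist ws X + e" using ws(2) by fastforce
  qed
  then show ?thesis using ws(1) by blast
qed

text \<open>Federer's observation. The far point of the ball is at distance infdist x X + s from X,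
  which forces it onto the normal ray.\<close>
lemma nn_along_normal:
  assumes m: "0 < infdist x X" and s: "0 \<le> s" and R: "infdist x X + s < R"
  shows "nn X (x + (s / infdist x X) *\<^sub>R (x - nn X x)) = nn X x"
proof -
  define m a where "m = infdist x X" and "a = nn X x"
  obtain ws where ws: "ws \<in> cball x s" "m + s \<le> infdist ws X"
    using exists_far_point_in_cball[OF assms] by (auto simp: m_def)
  have xR: "infdist x X < R" using R s by simp
  have a: "a \<in> closure X" "norm (x - a) = m"
    using nn_in_closure[OF xR] norm_diff_nn[OF xR] by (auto simp: a_def m_def)
  have le: "infdist ws X \<le> norm (ws - a)"
    using infdist_le_if_mem_closure[OF a(1)] by (simp add: dist_norm)
  have tri: "norm (ws - a) \<le> norm (ws - x) + norm (x - a)"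
    using norm_triangle_ineq[of "ws - x" "x - a"] by simp
  have wsx: "norm (ws - x) \<le> s" using ws(1) by (simp add: dist_norm norm_minus_commute)
  have eq: "norm (ws - x) = s" "norm (ws - a) = norm (ws - x) + norm (x - a)" "infdist ws X = norm (ws - a)"
    using le tri wsx ws(2) a(2) by linarith+
  then have "norm ((ws - x) + (x - a)) = norm (ws - x) + norm (x - a)" by simp
  then have "norm (ws - x) *\<^sub>R (x - a) = norm (x - a) *\<^sub>R (ws - x)"
    using norm_triangle_eq by blast
  then have "s *\<^sub>R (x - a) = m *\<^sub>R (ws - x)" using eq(1) a(2) by simp
  then have "(1 / m) *\<^sub>R (s *\<^sub>R (x - a)) = (1 / m) *\<^sub>R (m *\<^sub>R (ws - x))" by simp
  then have "(s / m) *\<^sub>R (x - a) = ws - x" using m by (simp add: m_def)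
  then have ws_eq: "ws = x + (s / m) *\<^sub>R (x - a)" by (simp add: algebra_simps)
  have "nn X ws = a"
    using infdist_le_add_if_mem_cball[OF ws(1), of X] R a(1) eq(3)
    by (intro nn_eqI) (auto simp: dist_norm)
  then show ?thesis using ws_eq by (simp add: a_def m_def)
qed

text \<open>Compare b with the point at distance S from X on the normal ray through u, whose nearest
  point is still nn X u.\<close>
lemma inner_normal_le:
  assumes u: "infdist u X \<le> S" and S: "S < R" and b: "b \<in> closure X"
  shows "2 * S * inner (u - nn X u) (b - nn X u) \<le> infdist u X * (norm (nn X u - b))\<^sup>2"
proof (cases "infdist u X = 0")
  case True
  then show ?thesis using norm_diff_nn[of u] u S by simp
next
  case False
  define d a where "d = infdist u X" and "a = nn X u"
  have d: "0 < d" using False infdist_nonneg[of u X] by (simp add: d_def)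
  have uR: "infdist u X < R" using u S by simp
  have ua: "norm (u - a) = d" using norm_diff_nn[OF uR] by (simp add: a_def d_def)
  define p where "p = u + ((S - d) / d) *\<^sub>R (u - a)"
  have "p - a = (1 + (S - d) / d) *\<^sub>R (u - a)" by (simp add: p_def algebra_simps)
  also have "1 + (S - d) / d = S / d" using d by (simp add: field_simps)
  finally have pa: "p - a = (S / d) *\<^sub>R (u - a)" .
  have "nn X p = a" using nn_along_normal[of u "S - d"] d u S by (simp add: p_def a_def d_def)
  moreover have "infdist p X < R"
    using infdist_le_add_if_mem_cball[of p u "S - d" X] d u S ua
    by (simp add: p_def dist_norm d_def abs_of_nonneg)
  ultimately have "S \<le> norm (p - b)"
    using dist_nn[of p] infdist_le_if_mem_closure[OF b, of p] pa ua d u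
    by (simp add: dist_norm d_def abs_of_nonneg)
  moreover have "p - b = (a - b) + (S / d) *\<^sub>R (u - a)"
  proof -
    have "p - b = (p - a) + (a - b)" by simp
    then show ?thesis unfolding pa by simp
  qed
  ultimately have "S\<^sup>2 \<le> (norm ((a - b) + (S / d) *\<^sub>R (u - a)))\<^sup>2"
    using u infdist_nonneg[of u X] by (auto intro: power_mono)
  also have "\<dots> = (norm (a - b))\<^sup>2 + 2 * (S / d) * inner (u - a) (a - b) + S\<^sup>2"
    using ua d by (simp add: power2_norm_add_scaleR power_divide)
  finally have "0 \<le> d * (norm (a - b))\<^sup>2 + 2 * S * inner (u - a) (a - b)"
    using d by (simp add: field_simps)
  then show ?thesis by (simp add: a_def d_def inner_diff_right algebra_simps)
qed

text \<open>Adding the two normal-cone inequalities at u and v.\<close>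
lemma nn_lipschitz:
  assumes uv: "infdist u X + infdist v X < R"
  shows "norm (nn X u - nn X v) \<le> 2 * norm (u - v)"
proof -
  define S a b where "S = infdist u X + infdist v X" and "a = nn X u" and "b = nn X v"
  have uR: "infdist u X < R" and vR: "infdist v X < R"
    using uv infdist_nonneg[of u X] infdist_nonneg[of v X] by linarith+
  have h1: "2 * S * inner (u - a) (b - a) \<le> infdist u X * (norm (a - b))\<^sup>2"
    using inner_normal_le[of u S b] nn_in_closure[OF vR] uv infdist_nonneg[of v X]
    by (simp add: S_def a_def b_def)
  have h2: "2 * S * inner (v - b) (a - b) \<le> infdist v X * (norm (a - b))\<^sup>2"
    using inner_normal_le[of v S a] nn_in_closure[OF uR] uv infdist_nonneg[of u X]
    by (simp add: S_def a_def b_def norm_minus_commute)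
  have sum: "inner (u - a) (b - a) + inner (v - b) (a - b) = inner (u - v) (b - a) + (norm (a - b))\<^sup>2"
    by (simp add: inner_diff_left inner_diff_right inner_commute power2_norm_eq_inner algebra_simps)
  have "2 * S * (inner (u - v) (b - a) + (norm (a - b))\<^sup>2)
      = 2 * S * inner (u - a) (b - a) + 2 * S * inner (v - b) (a - b)"
    unfolding sum[symmetric] by (simp add: distrib_left)
  also have "\<dots> \<le> S * (norm (a - b))\<^sup>2" using h1 h2 by (simp add: S_def distrib_right)
  finally have "2 * S * (- inner (u - v) (a - b) + (norm (a - b))\<^sup>2) \<le> S * (norm (a - b))\<^sup>2"
    by (simp add: inner_diff_right[of "u - v" b a] inner_diff_right[of "u - v" a b])
  then have key: "S * (norm (a - b))\<^sup>2 \<le> 2 * S * inner (u - v) (a - b)"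
    by (simp add: algebra_simps)
  show ?thesis
  proof (cases "S = 0")
    case True
    then have "infdist u X = 0" "infdist v X = 0"
      using infdist_nonneg[of u X] infdist_nonneg[of v X] by (simp_all add: S_def)
    then have "u = a" "v = b" using norm_diff_nn[OF uR] norm_diff_nn[OF vR] by (simp_all add: a_def b_def)
    then show ?thesis by (simp add: a_def b_def)
  next
    case False
    then have "0 < S" using infdist_nonneg[of u X] infdist_nonneg[of v X] by (simp add: S_def)
    moreover have "2 * S * inner (u - v) (a - b) \<le> S * (2 * norm (u - v) * norm (a - b))"
      using \<open>0 < S\<close> norm_cauchy_schwarz[of "u - v" "a - b"] by (simp add: mult_left_mono)
    ultimately have "(norm (a - b))\<^sup>2 \<le> 2 * norm (u - v) * norm (a - b)"
      using key by (simp add: mult_le_cancel_left_pos)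
    then show ?thesis
      by (cases "norm (a - b) = 0") (auto simp: a_def b_def power2_eq_square)
  qed
qed

lemma norm_diff_normals_le:
  assumes "infdist u X + infdist v X < R"
  shows "norm ((u - nn X u) - (v - nn X v)) \<le> 3 * norm (u - v)"
proof -
  have "norm ((u - nn X u) - (v - nn X v)) \<le> norm (u - v) + norm (nn X u - nn X v)"
    using norm_triangle_ineq4[of "u - v" "nn X u - nn X v"] by (simp add: algebra_simps)
  then show ?thesis using nn_lipschitz[OF assms] by simp
qed

end

lemma unique_closest_below_if_tube:
  assumes "reach X > 0" "u \<in> tube X" "v \<in> tube X"
  shows "\<exists>R. infdist u X + infdist v X < R \<and> unique_closest_below X R"
proof -
  note bounds = infdist_less_reach_div_2_if_tube[OF assms(2)] infdist_less_reach_div_2_if_tube[OF assms(3)]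
  have "\<exists>R. infdist u X + infdist v X < R \<and> (\<forall>x. infdist x X < R \<longrightarrow> (\<exists>!y. is_closest X x y))"
  proof (cases "reach X")
    case (real r)
    then show ?thesis using bounds unique_closest_if_infdist_less_reach[of _ X]
      by (intro exI[of _ r]) auto
  next
    case PInf
    then show ?thesis using unique_closest_if_infdist_less_reach[of _ X]
      by (intro exI[of _ "infdist u X + infdist v X + 1"]) auto
  qed (use assms(1) in simp)
  then show ?thesis using nonempty_if_reach_pos[OF assms(1)] by (auto simp: unique_closest_below_def)
qed

section \<open>Slabs and their minimum-norm points\<close>

definition slab :: "('a::real_inner \<Rightarrow> 'b::real_inner) \<Rightarrow> 'a set \<Rightarrow> 'a \<Rightarrow> real \<Rightarrow> 'b set" where
  "slab P C n r = {z. \<forall>w\<in>C. \<bar>inner z (P w) - inner n w\<bar> \<le> r}"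

lemma feas_eq_slab: "feas X P C eps u = slab P C (u - nn X u) (eps / 30 * norm (u - nn X u))"
proof -
  have abs_le: "(x - y - r \<le> 0 \<and> y - x - r \<le> 0) \<longleftrightarrow> \<bar>x - y\<bar> \<le> r" for x y r :: real
    by linarith
  show ?thesis unfolding feas_def slab_def abs_le ..
qed

lemma slab_eq_Inter_halfspaces:
  "slab P C n r = (\<Inter>w\<in>C. {z. inner (P w) z \<le> inner n w + r} \<inter> {z. inner (P w) z \<ge> inner n w - r})"
proof -
  have abs_le: "\<bar>x - y\<bar> \<le> r \<longleftrightarrow> x \<le> y + r \<and> y - r \<le> x" for x y r :: real by linarith
  show ?thesis unfolding slab_def abs_le by (auto simp: inner_commute)
qed

lemma closed_slab: "closed (slab P C n r)"
  unfolding slab_eq_Inter_halfspaces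
  by (intro closed_INT ballI closed_Int closed_halfspace_le closed_halfspace_ge)

lemma slab_combination:
  assumes "y \<in> slab P C n r" "z \<in> slab P C n s" "0 \<le> t" "t \<le> 1"
  shows "(1 - t) *\<^sub>R y + t *\<^sub>R z \<in> slab P C n ((1 - t) * r + t * s)"
  unfolding slab_def
proof (intro CollectI ballI)
  fix w assume "w \<in> C"
  define a b where "a = inner y (P w) - inner n w" and "b = inner z (P w) - inner n w"
  have ab: "\<bar>a\<bar> \<le> r" "\<bar>b\<bar> \<le> s"
    using assms(1,2) \<open>w \<in> C\<close> by (auto simp: slab_def a_def b_def)
  have "inner ((1 - t) *\<^sub>R y + t *\<^sub>R z) (P w) - inner n w = (1 - t) * a + t * b"
    by (simp add: a_def b_def inner_add_left algebra_simps)
  also have "\<bar>(1 - t) * a + t * b\<bar> \<le> (1 - t) * \<bar>a\<bar> + t * \<bar>b\<bar>"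
    using abs_triangle_ineq[of "(1 - t) * a" "t * b"] assms(3,4) by (simp add: abs_mult)
  also have "\<dots> \<le> (1 - t) * r + t * s"
    using ab assms(3,4) by (intro add_mono mult_left_mono) auto
  finally show "\<bar>inner ((1 - t) *\<^sub>R y + t *\<^sub>R z) (P w) - inner n w\<bar> \<le> (1 - t) * r + t * s" .
qed

lemma convex_slab: "convex (slab P C n r)"
  unfolding convex_alt using slab_combination[of _ P C n r _ r] by (simp add: algebra_simps)

lemma slab_mono: "r \<le> s \<Longrightarrow> slab P C n r \<subseteq> slab P C n s"
  by (auto simp: slab_def)

lemma slab_shift:
  assumes "\<forall>w\<in>C. norm w \<le> 1"
  shows "slab P C n r \<subseteq> slab P C n' (r + norm (n - n'))"
  unfolding slab_def
proof (intro subsetI CollectI ballI)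
  fix z w assume z: "z \<in> {z. \<forall>w\<in>C. \<bar>inner z (P w) - inner n w\<bar> \<le> r}" and w: "w \<in> C"
  have "\<bar>inner (n - n') w\<bar> \<le> norm (n - n') * norm w" by (rule Cauchy_Schwarz_ineq2)
  also have "\<dots> \<le> norm (n - n')" using assms w by (simp add: mult_left_le)
  finally show "\<bar>inner z (P w) - inner n' w\<bar> \<le> r + norm (n - n')"
    using z w by (auto simp: inner_diff_left)
qed

text \<open>The radius eps/30 * norm n of the slabs defining feas moves with the normal too, whence
  the factor 31/30.\<close>
lemma slab_relative_shift:
  assumes "\<forall>w\<in>C. norm w \<le> 1" "0 \<le> eps" "eps \<le> 1"
  shows "slab P C n (eps / 30 * norm n + s)
      \<subseteq> slab P C n' (eps / 30 * norm n' + s + 31 / 30 * norm (n - n'))"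
proof -
  have "eps / 30 * norm n \<le> eps / 30 * (norm n' + norm (n - n'))"
    using assms(2) norm_triangle_sub[of n n'] by (intro mult_left_mono) (auto simp: algebra_simps)
  also have "\<dots> \<le> eps / 30 * norm n' + 1 / 30 * norm (n - n')"
    using assms(2,3) mult_left_le_one_le[of "norm (n - n')" eps] by (simp add: distrib_left)
  finally have "eps / 30 * norm n + s + norm (n - n')
      \<le> eps / 30 * norm n' + s + 31 / 30 * norm (n - n')" by simp
  then show ?thesis using slab_shift[OF assms(1)] slab_mono by blast
qed

text \<open>The slack of zs in the slabs around n absorbs the shift of the slabs from n to n', in both
  directions.\<close>
lemma slab_combinations_swap:
  assumes C: "\<forall>w\<in>C. norm w \<le> 1" and eps: "0 \<le> eps" "eps \<le> 1" and \<delta>: "0 \<le> \<delta>" "\<delta> \<le> 1"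
    and shift: "31 / 30 * norm (n - n') \<le> \<delta> * (eps / 60 * norm n)"
    and zs: "zs \<in> slab P C n (eps / 60 * norm n)"
  shows "y \<in> slab P C n (eps / 30 * norm n) \<Longrightarrow>
      (1 - \<delta>) *\<^sub>R y + \<delta> *\<^sub>R zs \<in> slab P C n' (eps / 30 * norm n')"
    and "y' \<in> slab P C n' (eps / 30 * norm n') \<Longrightarrow>
      (1 - \<delta>) *\<^sub>R y' + \<delta> *\<^sub>R zs \<in> slab P C n (eps / 30 * norm n)"
proof -
  assume "y \<in> slab P C n (eps / 30 * norm n)"
  then have "(1 - \<delta>) *\<^sub>R y + \<delta> *\<^sub>R zs
      \<in> slab P C n ((1 - \<delta>) * (eps / 30 * norm n) + \<delta> * (eps / 60 * norm n))"
    by (rule slab_combination[OF _ zs \<delta>])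
  also have "(1 - \<delta>) * (eps / 30 * norm n) + \<delta> * (eps / 60 * norm n)
      = eps / 30 * norm n + - (\<delta> * (eps / 60 * norm n))" by (simp add: field_simps)
  also have "slab P C n (eps / 30 * norm n + - (\<delta> * (eps / 60 * norm n)))
      \<subseteq> slab P C n' (eps / 30 * norm n' + - (\<delta> * (eps / 60 * norm n)) + 31 / 30 * norm (n - n'))"
    by (rule slab_relative_shift[OF C eps])
  also have "\<dots> \<subseteq> slab P C n' (eps / 30 * norm n')"
    using shift by (intro slab_mono) linarith
  finally show "(1 - \<delta>) *\<^sub>R y + \<delta> *\<^sub>R zs \<in> slab P C n' (eps / 30 * norm n')" .
next
  assume "y' \<in> slab P C n' (eps / 30 * norm n')"
  then have "y' \<in> slab P C n (eps / 30 * norm n + 31 / 30 * norm (n - n'))"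
    using slab_relative_shift[OF C eps, where P=P and n=n' and s=0 and n'=n] by (simp add: norm_minus_commute subset_iff)
  then have "(1 - \<delta>) *\<^sub>R y' + \<delta> *\<^sub>R zs \<in> slab P C n
      ((1 - \<delta>) * (eps / 30 * norm n + 31 / 30 * norm (n - n')) + \<delta> * (eps / 60 * norm n))"
    by (rule slab_combination[OF _ zs \<delta>])
  also have "\<dots> \<subseteq> slab P C n (eps / 30 * norm n)"
  proof (rule slab_mono)
    have "(1 - \<delta>) * (31 / 30 * norm (n - n')) \<le> 31 / 30 * norm (n - n')"
      using \<delta> by (intro mult_left_le_one_le) auto
    moreover have "(1 - \<delta>) * (eps / 30 * norm n + 31 / 30 * norm (n - n')) + \<delta> * (eps / 60 * norm n)
        = eps / 30 * norm n + (1 - \<delta>) * (31 / 30 * norm (n - n')) - \<delta> * (eps / 60 * norm n)"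
      by (simp add: field_simps)
    ultimately show "(1 - \<delta>) * (eps / 30 * norm n + 31 / 30 * norm (n - n')) + \<delta> * (eps / 60 * norm n)
        \<le> eps / 30 * norm n"
      using shift by linarith
  qed
  finally show "(1 - \<delta>) *\<^sub>R y' + \<delta> *\<^sub>R zs \<in> slab P C n (eps / 30 * norm n)" .
qed

lemma beta_eq_closest_point:
  assumes "feas X P C eps u \<noteq> {}"
  shows "beta X P C eps u = closest_point (feas X P C eps u) 0"
proof -
  let ?F = "feas X P C eps u"
  have F: "convex ?F" "closed ?F" by (simp_all add: feas_eq_slab convex_slab closed_slab)
  have min: "closest_point ?F 0 \<in> ?F \<and> (\<forall>y\<in>?F. norm (closest_point ?F 0) \<le> norm y)"
    using closest_point_exists[OF F(2) assms, of 0] by simp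
  show ?thesis
    unfolding beta_def
  proof (rule the_equality)
    show "closest_point ?F 0 \<in> ?F \<and> (\<forall>y\<in>?F. norm (closest_point ?F 0) \<le> norm y)" by (rule min)
    fix z assume "z \<in> ?F \<and> (\<forall>y\<in>?F. norm z \<le> norm y)"
    then show "z = closest_point ?F 0"
      by (intro closest_point_unique[OF F]) auto
  qed
qed

lemma power2_norm_diff_closest_point_0_le:
  assumes "convex S" "closed S" "y \<in> S"
  shows "(norm (y - closest_point S 0))\<^sup>2 \<le> (norm y)\<^sup>2 - (norm (closest_point S 0))\<^sup>2"
proof -
  define c where "c = closest_point S 0"
  have "0 \<le> inner c (y - c)"
    using closest_point_dot[OF assms, of 0] by (simp add: c_def)
  moreover have "(norm y)\<^sup>2 = (norm c)\<^sup>2 + 2 * inner c (y - c) + (norm (y - c))\<^sup>2"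
    by (simp add: power2_norm_eq_inner inner_diff inner_commute)
  ultimately show ?thesis by (simp add: c_def)
qed

lemma power2_diff_le_of_convex_bounds:
  fixes \<delta> x y z d :: real
  assumes \<delta>: "0 \<le> \<delta>" "\<delta> \<le> 1" and "0 \<le> x" "x \<le> d" "0 \<le> y" "0 \<le> z"
    and z: "z \<le> (1 - \<delta>) * x + \<delta> * d" and x: "x \<le> (1 - \<delta>) * y + \<delta> * d"
  shows "z\<^sup>2 - y\<^sup>2 \<le> 4 * \<delta> * d\<^sup>2"
proof -
  have "(1 - \<delta>) * y \<le> y" "(1 - \<delta>) * x \<le> x" using assms by (auto intro: mult_left_le_one_le)
  then have y: "x - \<delta> * d \<le> y" and z': "z \<le> x + \<delta> * d" using z x by linarith+
  have z2: "z\<^sup>2 \<le> (x + \<delta> * d)\<^sup>2" using z' assms by (simp add: power_mono)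
  show ?thesis
  proof (cases "\<delta> * d \<le> x")
    case True
    have "(x - \<delta> * d)\<^sup>2 \<le> y\<^sup>2" using y True by (simp add: power_mono)
    then have "z\<^sup>2 - y\<^sup>2 \<le> (x + \<delta> * d)\<^sup>2 - (x - \<delta> * d)\<^sup>2" using z2 by linarith
    also have "\<dots> = 4 * \<delta> * d * x" by (simp add: power2_eq_square algebra_simps)
    also have "\<dots> \<le> 4 * \<delta> * d * d" using assms by (intro mult_left_mono) auto
    finally show ?thesis by (simp add: power2_eq_square)
  next
    case False
    then have "(x + \<delta> * d)\<^sup>2 \<le> (2 * (\<delta> * d))\<^sup>2" using assms by (intro power_mono) auto
    also have "\<dots> = 4 * \<delta> * (\<delta> * d\<^sup>2)" by (simp add: power2_eq_square algebra_simps)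
    also have "\<dots> \<le> 4 * \<delta> * d\<^sup>2"
      using \<delta> mult_left_le_one_le[of "d\<^sup>2" \<delta>] by (simp add: mult_left_mono)
    finally have "z\<^sup>2 \<le> 4 * \<delta> * d\<^sup>2" using z2 by linarith
    then show ?thesis using zero_le_power2[of y] by linarith
  qed
qed

text \<open>Minimality of the two closest points bounds the difference of squared norms; the obtuse-angle
  property of the projection onto F' turns this into a bound on the distance.\<close>
lemma closest_point_0_combination_dist:
  fixes F F' :: "'a::euclidean_space set"
  assumes F: "convex F" "closed F" and F': "convex F'" "closed F'"
    and zs: "zs \<in> F" "norm zs \<le> d" and \<delta>: "0 \<le> \<delta>" "\<delta> \<le> 1"
    and z_mem: "(1 - \<delta>) *\<^sub>R closest_point F 0 + \<delta> *\<^sub>R zs \<in> F'"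
    and y_mem: "(1 - \<delta>) *\<^sub>R closest_point F' 0 + \<delta> *\<^sub>R zs \<in> F"
  shows "(norm ((1 - \<delta>) *\<^sub>R closest_point F 0 + \<delta> *\<^sub>R zs - closest_point F' 0))\<^sup>2 \<le> 4 * \<delta> * d\<^sup>2"
proof -
  define c c' where "c = closest_point F 0" and "c' = closest_point F' 0"
  define z where "z = (1 - \<delta>) *\<^sub>R c + \<delta> *\<^sub>R zs"
  have comb_le: "norm ((1 - \<delta>) *\<^sub>R a + \<delta> *\<^sub>R zs) \<le> (1 - \<delta>) * norm a + \<delta> * d" for a :: 'a
  proof -
    have "norm ((1 - \<delta>) *\<^sub>R a + \<delta> *\<^sub>R zs) \<le> (1 - \<delta>) * norm a + \<delta> * norm zs"
      using norm_triangle_ineq[of "(1 - \<delta>) *\<^sub>R a" "\<delta> *\<^sub>R zs"] \<delta> by simp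
    also have "\<delta> * norm zs \<le> \<delta> * d" using zs(2) \<delta> by (intro mult_left_mono)
    finally show ?thesis by simp
  qed
  have c_le: "norm c \<le> norm y" if "y \<in> F" for y
    using closest_point_le[OF F(2) that, of 0] by (simp add: c_def)
  have "(norm z)\<^sup>2 - (norm c')\<^sup>2 \<le> 4 * \<delta> * d\<^sup>2"
  proof (rule power2_diff_le_of_convex_bounds[OF \<delta>])
    show "norm c \<le> d" using c_le[OF zs(1)] zs(2) by simp
    show "norm z \<le> (1 - \<delta>) * norm c + \<delta> * d" unfolding z_def by (rule comb_le)
    show "norm c \<le> (1 - \<delta>) * norm c' + \<delta> * d"
      using c_le[OF y_mem[folded c'_def]] comb_le[of c'] by simp
  qed simp_all
  moreover have "(norm (z - c'))\<^sup>2 \<le> (norm z)\<^sup>2 - (norm c')\<^sup>2"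
    unfolding c'_def by (rule power2_norm_diff_closest_point_0_le[OF F']) (use z_mem in \<open>simp add: z_def c_def\<close>)
  ultimately show ?thesis by (simp add: z_def c_def c'_def)
qed

lemma norm_le_1_if_mem_secants:
  assumes "w \<in> secants X" shows "norm w \<le> 1"
proof -
  have "secants X \<subseteq> sphere 0 1"
    unfolding secants_def by (rule closure_minimal) auto
  then show ?thesis using assms by auto
qed

lemma mem_slab_iff_slack:
  "(\<forall>w\<in>C. inner z (P w) - inner n w - eps / 30 * norm n \<le> - (eps / 60) * norm n \<and>
      inner n w - inner z (P w) - eps / 30 * norm n \<le> - (eps / 60) * norm n)
    \<longleftrightarrow> z \<in> slab P C n (eps / 60 * norm n)"
proof -
  have half: "eps / 30 * norm n = eps / 60 * norm n + eps / 60 * norm n" by simp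
  have "(x - y - eps / 30 * norm n \<le> - (eps / 60) * norm n \<and> y - x - eps / 30 * norm n \<le> - (eps / 60) * norm n)
      \<longleftrightarrow> \<bar>x - y\<bar> \<le> eps / 60 * norm n" for x y :: real
    unfolding half by linarith
  then show ?thesis unfolding slab_def by simp
qed

lemma closest_point_slab_perturbation:
  fixes P :: "'a::euclidean_space \<Rightarrow> 'b::euclidean_space"
  assumes C: "\<forall>w\<in>C. norm w \<le> 1" and eps: "0 < eps" "eps \<le> 1"
    and n: "n \<noteq> 0" and h: "0 \<le> h" "h \<le> eps * norm n / 480" and n': "norm (n - n') \<le> 3 * h"
    and zs: "zs \<in> slab P C n (eps / 60 * norm n)" "norm zs \<le> norm n"
  defines "\<delta> \<equiv> 240 * h / (eps * norm n)"
    and "F \<equiv> slab P C n (eps / 30 * norm n)" and "F' \<equiv> slab P C n' (eps / 30 * norm n')"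
  shows "F \<noteq> {}" and "F' \<noteq> {}"
    and "norm ((1 - \<delta>) *\<^sub>R closest_point F 0 + \<delta> *\<^sub>R zs - closest_point F' 0)
      \<le> 128 * sqrt (norm n) / sqrt eps * sqrt h"
proof -
  have d: "0 < norm n" using n by simp
  have \<delta>: "0 \<le> \<delta>" "\<delta> \<le> 1"
    using d eps h by (auto simp: \<delta>_def divide_le_eq)
  have "\<delta> * (eps / 60 * norm n) = 4 * h" using d eps by (simp add: \<delta>_def field_simps)
  then have shift: "31 / 30 * norm (n - n') \<le> \<delta> * (eps / 60 * norm n)" using n' h by linarith
  note swap = slab_combinations_swap[OF C _ _ \<delta> shift zs(1), folded F_def F'_def]
  have F: "convex F" "closed F" "zs \<in> F"
    using zs(1) eps slab_mono[of "eps / 60 * norm n" "eps / 30 * norm n"]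
    by (auto simp: F_def convex_slab closed_slab)
  then show "F \<noteq> {}" by blast
  have F': "convex F'" "closed F'" by (simp_all add: F'_def convex_slab closed_slab)
  have mem: "(1 - \<delta>) *\<^sub>R closest_point F 0 + \<delta> *\<^sub>R zs \<in> F'"
    using swap(1) closest_point_in_set[OF F(2)] F(3) eps by auto
  then show "F' \<noteq> {}" by blast
  then have "(1 - \<delta>) *\<^sub>R closest_point F' 0 + \<delta> *\<^sub>R zs \<in> F"
    using swap(2) closest_point_in_set[OF F'(2)] eps by auto
  then have "(norm ((1 - \<delta>) *\<^sub>R closest_point F 0 + \<delta> *\<^sub>R zs - closest_point F' 0))\<^sup>2
      \<le> 4 * \<delta> * (norm n)\<^sup>2"
    by (intro closest_point_0_combination_dist[OF F(1,2) F' F(3) zs(2) \<delta> mem])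
  also have "\<dots> = 960 / eps * norm n * h" using d eps by (simp add: \<delta>_def power2_eq_square)
  also have "\<dots> \<le> 16384 / eps * norm n * h"
    using d eps h by (intro mult_right_mono divide_right_mono) auto
  also have "\<dots> = (128 * sqrt (norm n) / sqrt eps * sqrt h)\<^sup>2"
    using d eps h by (simp add: power_mult_distrib power_divide)
  finally show "norm ((1 - \<delta>) *\<^sub>R closest_point F 0 + \<delta> *\<^sub>R zs - closest_point F' 0)
      \<le> 128 * sqrt (norm n) / sqrt eps * sqrt h"
    by (rule power2_le_imp_le) (use eps h in simp)
qed

theorem lemma4p7:
  fixes X :: "'a::euclidean_space set" and P :: "'a \<Rightarrow> 'b::euclidean_space"
    and C :: "'a set" and eps :: real and u v :: 'a and zs :: 'b
  assumes eps: "0 < eps" "eps < 1"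
    and reach_pos: "reach X > 0"
    and C_fin: "finite C" and C_sub: "C \<subseteq> secants X"
    and C_net: "\<forall>s\<in>secants X. \<exists>w\<in>C. dist s w < eps / 40"
    and Pi_lin: "linear P"
    and Pi_dist: "cvx_hull_distortion P (eps / 240) (secants X)"
    and u: "u \<in> tube X" "u \<notin> closure X"
    and zs_norm: "norm zs \<le> norm (u - nn X u)"
    and zs_feas: "\<forall>w\<in>C.
        inner zs (P w) - inner (u - nn X u) w - eps / 30 * norm (u - nn X u)
          \<le> - (eps / 60) * norm (u - nn X u) \<and>
        inner (u - nn X u) w - inner zs (P w) - eps / 30 * norm (u - nn X u)
          \<le> - (eps / 60) * norm (u - nn X u)"
    and beta_nz: "beta X P C eps u \<noteq> 0"
    and v: "v \<in> ball u (min 1 (eps * norm (u - nn X u) / 480))" "v \<in> tube X"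
    and uv: "norm (u - v) \<le> eps * norm (beta X P C eps u) / 480"
  shows "let \<delta> = 240 * norm (u - v) / (eps * norm (u - nn X u));
             zv = (1 - \<delta>) *\<^sub>R beta X P C eps u + \<delta> *\<^sub>R zs
         in norm (zv - beta X P C eps v)
            \<le> 128 * sqrt (norm (u - nn X u)) / sqrt eps * sqrt (norm (u - v))"
proof -
  obtain R where R: "infdist u X + infdist v X < R" "unique_closest_below X R"
    using unique_closest_below_if_tube[OF reach_pos u(1) v(2)] by blast
  interpret unique_closest_below X R by (rule R(2))
  define n n' where "n = u - nn X u" and "n' = v - nn X v"
  have C: "\<forall>w\<in>C. norm w \<le> 1" using C_sub norm_le_1_if_mem_secants by blast
  have n: "n \<noteq> 0" using u(2) nn_in_closure[of u] R(1) infdist_nonneg[of v X] by (auto simp: n_def)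
  have h: "norm (u - v) \<le> eps * norm n / 480" using v(1) by (simp add: n_def dist_norm)
  have n': "norm (n - n') \<le> 3 * norm (u - v)"
    using norm_diff_normals_le[OF R(1)] by (simp add: n_def n'_def)
  have zs: "zs \<in> slab P C n (eps / 60 * norm n)"
    unfolding n_def by (rule mem_slab_iff_slack[THEN iffD1, OF zs_feas])
  from closest_point_slab_perturbation[OF C eps(1) less_imp_le[OF eps(2)] n
      norm_ge_zero h n' zs zs_norm[folded n_def]]
  show ?thesis by (simp add: Let_def beta_eq_closest_point feas_eq_slab n_def n'_def)
qed

end
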